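(* Let $\Omega$ be a bounded domain in $\mathbb{H}^{n+1}$ and let $\phi$ be a smooth, positive, even function on $\mathbb{R}$ with $(\log\phi)''\ge0$. Then $$\int_\Omega\phi'(\lambda)\lambda'\lambda\,dv\ge\eta\Big(\int_\Omega\phi(\lambda)\lambda'\,dv\Big),$$ where $\eta$ is determined by $$\eta\Big(\omega_n\int_0^t\phi(s)s^n\,ds\Big)=\omega_n\int_0^t\phi'(s)s^{n+1}\,ds\qquad\forall\,t\ge0.$$ If $\phi(\lambda(r))$ is not constant on $\Omega$, then equality holds if and only if $\Omega$ is a geodesic ball centered at the origin.
   Context: A fixed point of $\mathbb{H}^{n+1}$ is the origin; $r$ is the geodesic distance to it, $\lambda=\sinh r$, $\lambda'=\cosh r$. $dv$ is the hyperbolic volume element and $\omega_n$ the area of the unit sphere $\mathbb{S}^n$. *)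

theory Defs
  imports "HOL-Analysis.Analysis"
begin

text \<open>Model of hyperbolic space H^(n+1): the Poincare ball model on the open unit
  ball of a Euclidean space 'a with DIM('a) = n+1; the origin is 0.\<close>

definition poincare_ball :: "'a::euclidean_space set" where
  "poincare_ball = ball 0 1"

definition hdist0 :: "'a::euclidean_space \<Rightarrow> real" where
  "hdist0 x = ln ((1 + norm x) / (1 - norm x))"

definition hlam :: "'a::euclidean_space \<Rightarrow> real" where
  "hlam x = sinh (hdist0 x)"

definition hlam' :: "'a::euclidean_space \<Rightarrow> real" where
  "hlam' x = cosh (hdist0 x)"

text \<open>Density of the hyperbolic volume element dv with respect to Lebesgue measure.\<close>
definition hdens :: "'a::euclidean_space \<Rightarrow> real" where
  "hdens x = (2 / (1 - (norm x)\<^sup>2)) ^ DIM('a)"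

definition hyp_integral :: "'a::euclidean_space set \<Rightarrow> ('a \<Rightarrow> real) \<Rightarrow> real" where
  "hyp_integral \<Omega> f = (LINT x:\<Omega>|lborel. f x * hdens x)"

text \<open>Bounded domain: nonempty, open, connected, regular open (a minimal boundary
  regularity, implied by a C^1 boundary), and bounded in the hyperbolic metric.\<close>
definition hyp_bounded_domain :: "'a::euclidean_space set \<Rightarrow> bool" where
  "hyp_bounded_domain \<Omega> \<longleftrightarrow> \<Omega> \<noteq> {} \<and> open \<Omega> \<and> connected \<Omega> \<and>
     interior (closure \<Omega>) = \<Omega> \<and>
     \<Omega> \<subseteq> poincare_ball \<and> (\<exists>R. \<forall>x\<in>\<Omega>. hdist0 x \<le> R)"

definition hyp_ball0 :: "real \<Rightarrow> 'a::euclidean_space set" where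
  "hyp_ball0 \<rho> = {x \<in> poincare_ball. hdist0 x < \<rho>}"

text \<open>Area of the unit sphere S^n in R^(n+1).\<close>
definition sphere_area :: "nat \<Rightarrow> real" where
  "sphere_area n = 2 * pi powr ((real n + 1) / 2) / Gamma ((real n + 1) / 2)"

definition smooth_fun :: "(real \<Rightarrow> real) \<Rightarrow> bool" where
  "smooth_fun f \<longleftrightarrow> (\<forall>k x. ((deriv ^^ k) f) differentiable (at x))"

end

theory Submission
  imports Defs
begin

text \<open>Write \<open>w = \<phi>(\<lambda>) \<lambda>' dv\<close> and \<open>e(s) = s \<phi>'(s) / \<phi>(s)\<close>, so that the two integrals
  of the theorem are \<open>\<integral> w\<close> and \<open>\<integral> e(\<lambda>) w\<close>. Log-convexity and evenness make \<open>e\<close>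
  nondecreasing on \<open>[0, \<infinity>)\<close>. Let \<open>B\<close> be the centered ball with the same \<open>w\<close>-mass
  as \<open>\<Omega>\<close> and \<open>c\<close> the value of \<open>e(\<lambda>)\<close> on its boundary sphere. Because the masses agree,
  \<open>\<integral>\<^sub>\<Omega> e(\<lambda>) w - \<integral>\<^sub>B e(\<lambda>) w\<close> equals the integral of \<open>(e(\<lambda>) - c) w\<close> over \<open>\<Omega> - B\<close>
  plus that of \<open>(c - e(\<lambda>)) w\<close> over \<open>B - \<Omega>\<close>, and both integrands are nonnegative since
  \<open>\<lambda>\<close> grows with the distance to the origin. On centered balls, polar coordinates
  turn both integrals into the one-dimensional integrals defining \<open>\<eta>\<close>, so balls give
  equality. Conversely, equality makes both integrands vanish almost everywhere: if
  \<open>e\<close> increases strictly beyond the boundary value, \<open>\<Omega>\<close> and \<open>B\<close> differ by a null set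
  and, \<open>\<Omega>\<close> being regular open, coincide; otherwise \<open>\<phi>'(\<lambda>)\<close> vanishes on \<open>\<Omega>\<close>.\<close>

section \<open>Integrals of radial functions over balls\<close>

lemma set_integrable_radial:
  fixes h :: "real \<Rightarrow> real"
  assumes h: "continuous_on {0..<1} h" and b: "b < 1"
    and S: "S \<in> sets lborel" "S \<subseteq> cball 0 b"
  shows "set_integrable lborel S (\<lambda>x::'a::euclidean_space. h (norm x))"
proof -
  have "continuous_on (cball (0::'a) b) (\<lambda>x. h (norm x))"
    by (rule continuous_on_compose2[OF h continuous_on_norm_id]) (use b in auto)
  then have "set_integrable lborel (cball (0::'a) b) (\<lambda>x. h (norm x))"
    unfolding set_integrable_def by (rule borel_integrable_compact[OF compact_cball])
  then show ?thesis using S set_integrable_subset by blast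
qed

lemma annulus_integral_radial_bound:
  fixes h :: "real \<Rightarrow> real"
  assumes h: "continuous_on {0..<1} h" and ab: "0 \<le> a" "a \<le> b" "b < 1"
    and close: "\<And>u. a \<le> u \<Longrightarrow> u \<le> b \<Longrightarrow> \<bar>h u - c\<bar> \<le> e"
  shows "\<bar>(LINT x:ball (0::'a::euclidean_space) b|lborel. h (norm x))
            - (LINT x:ball (0::'a) a|lborel. h (norm x))
            - c * (measure lborel (ball (0::'a) b) - measure lborel (ball (0::'a) a))\<bar>
         \<le> e * (measure lborel (ball (0::'a) b) - measure lborel (ball (0::'a) a))"
proof -
  define S where "S = ball (0::'a) b - ball 0 a"
  have S_sets: "S \<in> sets lborel" unfolding S_def by auto
  have int_S: "set_integrable lborel S (\<lambda>x::'a. h (norm x))"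
    by (rule set_integrable_radial[OF h ab(3) S_sets]) (auto simp: S_def)
  have int_a: "set_integrable lborel (ball 0 a) (\<lambda>x::'a. h (norm x))"
    by (rule set_integrable_radial[OF h ab(3)]) (use ab in auto)
  have split: "(LINT x:ball (0::'a) b|lborel. h (norm x))
      = (LINT x:ball (0::'a) a|lborel. h (norm x)) + (LINT x:S|lborel. h (norm x))"
  proof -
    have "ball (0::'a) b = ball 0 a \<union> S" "ball 0 a \<inter> S = {}" using ab by (auto simp: S_def)
    then show ?thesis using set_integral_Un[OF _ int_a int_S] by simp
  qed
  have measure_S: "measure lborel S = measure lborel (ball (0::'a) b) - measure lborel (ball (0::'a) a)"
    unfolding S_def using ab by (subst measure_Diff) (auto simp: emeasure_ball)
  have finite_S: "emeasure lborel S \<noteq> \<infinity>"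
    using emeasure_mono[of S "ball (0::'a) b" lborel] emeasure_ball[of b "0::'a"] ab
    by (auto simp: S_def top_unique)
  have int_const: "set_integrable lborel S (\<lambda>x::'a. k)" for k :: real
    using finite_S S_sets by (simp add: set_integrable_def less_top)
  have "\<bar>(LINT x:S|lborel. h (norm x)) - c * measure lborel S\<bar> = \<bar>LINT x:S|lborel. h (norm x) - c\<bar>"
    using set_integral_diff(2)[OF int_S int_const] set_integral_const[OF S_sets finite_S, of c]
    by (simp add: mult.commute)
  also have "\<dots> \<le> (LINT x:S|lborel. \<bar>h (norm x) - c\<bar>)"
    using set_integral_norm_bound[OF set_integral_diff(1)[OF int_S int_const]] by simp
  also have "\<dots> \<le> (LINT x:S|lborel. e)"
    using set_integrable_abs[OF set_integral_diff(1)[OF int_S int_const]] int_const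
    by (intro set_integral_mono) (auto intro!: close simp: S_def)
  also have "\<dots> = e * measure lborel S" using set_integral_const[OF S_sets finite_S, of e] by simp
  finally show ?thesis using split by (auto simp: measure_S algebra_simps)
qed

lemma ball_integral_radial_increment:
  fixes h :: "real \<Rightarrow> real" and r s :: real
  defines "A \<equiv> \<lambda>s. LINT x:ball (0::'a::euclidean_space) s|lborel. h (norm x)"
    and "W \<equiv> \<lambda>s. unit_ball_vol DIM('a) * s ^ DIM('a)"
  assumes h: "continuous_on {0..<1} h" and r: "0 \<le> r" "r < 1" and s: "0 \<le> s" "s < 1"
    and close: "\<And>u. min r s \<le> u \<Longrightarrow> u \<le> max r s \<Longrightarrow> \<bar>h u - h r\<bar> \<le> e"
  shows "\<bar>A s - A r - h r * (W s - W r)\<bar> \<le> e * \<bar>W s - W r\<bar>"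
proof -
  have vol: "measure lborel (ball (0::'a) u) = W u" if "0 \<le> u" for u
    using content_ball[OF that, of "0::'a"] by (simp add: W_def)
  show ?thesis
  proof (cases "s \<le> r")
    case True
    have "\<bar>A r - A s - h r * (W r - W s)\<bar> \<le> e * (W r - W s)"
      using annulus_integral_radial_bound[OF h s(1) True r(2), of "h r" e, where 'a='a] close True
      by (simp add: A_def vol r s)
    moreover have "W s \<le> W r" using True s by (auto simp: W_def intro!: mult_left_mono power_mono)
    ultimately show ?thesis by (simp add: abs_minus_commute[of "W s"] algebra_simps)
  next
    case False
    have "\<bar>A s - A r - h r * (W s - W r)\<bar> \<le> e * (W s - W r)"
      using annulus_integral_radial_bound[OF h r(1) _ s(2), of "h r" e, where 'a='a] close False
      by (simp add: A_def vol r s)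
    moreover have "W r \<le> W s" using False r by (auto simp: W_def intro!: mult_left_mono power_mono)
    ultimately show ?thesis by simp
  qed
qed

lemma ball_integral_radial_has_real_derivative:
  fixes h :: "real \<Rightarrow> real" and r :: real
  assumes h: "continuous_on {0..<1} h" and r: "0 \<le> r" "r < 1"
  shows "((\<lambda>s. LINT x:ball (0::'a::euclidean_space) s|lborel. h (norm x)) has_real_derivative
           h r * (unit_ball_vol DIM('a) * (DIM('a) * r ^ (DIM('a) - 1)))) (at r within {0..<1})"
proof -
  define A where "A = (\<lambda>s. LINT x:ball (0::'a) s|lborel. h (norm x))"
  define W where "W = (\<lambda>s::real. unit_ball_vol DIM('a) * s ^ DIM('a))"
  define D where "D = unit_ball_vol DIM('a) * (DIM('a) * r ^ (DIM('a) - 1))"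
  define E where "E = (\<lambda>s. A s - A r - h r * (W s - W r))"
  have "(W has_real_derivative D) (at r within {0..<1})"
    unfolding W_def D_def by (auto intro!: derivative_eq_intros)
  then have W': "((\<lambda>s. (W s - W r) / (s - r)) \<longlongrightarrow> D) (at r within {0..<1})"
    by (simp add: has_field_derivative_iff)
  have E': "((\<lambda>s. E s / (s - r)) \<longlongrightarrow> 0) (at r within {0..<1})"
  proof (rule tendstoI)
    fix e :: real assume e: "e > 0"
    define K where "K = \<bar>D\<bar> + 1"
    have K: "K > 0" by (simp add: K_def add_pos_nonneg)
    obtain d where d: "d > 0" "\<And>u. u \<in> {0..<1} \<Longrightarrow> dist u r < d \<Longrightarrow> dist (h u) (h r) < e / K"
      using h r K e unfolding continuous_on_iff by (metis atLeastLessThan_iff divide_pos_pos)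
    have "eventually (\<lambda>s. dist ((W s - W r) / (s - r)) D < 1) (at r within {0..<1})"
      using tendstoD[OF W', of 1] by simp
    moreover have "eventually (\<lambda>s. s \<in> {0..<1} \<and> s \<noteq> r \<and> dist s r < d) (at r within {0..<1})"
      unfolding eventually_at using d(1) by (auto intro!: exI[of _ d])
    ultimately show "eventually (\<lambda>s. dist (E s / (s - r)) 0 < e) (at r within {0..<1})"
    proof eventually_elim
      case (elim s)
      have "\<bar>E s\<bar> \<le> e / K * \<bar>W s - W r\<bar>"
        unfolding E_def A_def W_def
      proof (rule ball_integral_radial_increment[OF h r])
        fix u assume "min r s \<le> u" "u \<le> max r s"
        then have "u \<in> {0..<1}" "dist u r < d" using elim r by (auto simp: dist_real_def)
        then show "\<bar>h u - h r\<bar> \<le> e / K" using d(2) by (force simp: dist_real_def)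
      qed (use elim in auto)
      then have "\<bar>E s\<bar> / \<bar>s - r\<bar> \<le> e / K * \<bar>W s - W r\<bar> / \<bar>s - r\<bar>"
        by (rule divide_right_mono) simp
      then have "\<bar>E s / (s - r)\<bar> \<le> e / K * \<bar>(W s - W r) / (s - r)\<bar>"
        by (simp add: abs_divide)
      also have "\<dots> < e / K * K"
      proof -
        have "\<bar>(W s - W r) / (s - r)\<bar> < K"
          using elim(1) unfolding K_def dist_real_def by linarith
        then show ?thesis using e K by (intro mult_strict_left_mono) auto
      qed
      finally show ?case using K by (simp add: dist_real_def)
    qed
  qed
  have "((\<lambda>s. h r * ((W s - W r) / (s - r)) + E s / (s - r)) \<longlongrightarrow> h r * D + 0) (at r within {0..<1})"
    by (intro tendsto_intros W' E')
  moreover have "h r * ((W s - W r) / (s - r)) + E s / (s - r) = (A s - A r) / (s - r)" for s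
    by (simp add: E_def diff_divide_distrib right_diff_distrib)
  ultimately have "((\<lambda>s. (A s - A r) / (s - r)) \<longlongrightarrow> h r * D) (at r within {0..<1})"
    by simp
  then show ?thesis by (simp add: has_field_derivative_iff A_def D_def)
qed

lemma ball_integral_radial:
  fixes h P :: "real \<Rightarrow> real" and R :: real
  assumes h: "continuous_on {0..<1} h"
    and P': "\<And>r::real. 0 \<le> r \<Longrightarrow> r \<le> R \<Longrightarrow> (P has_real_derivative
               h r * (unit_ball_vol DIM('a) * (DIM('a) * r ^ (DIM('a) - 1)))) (at r within {0..R})"
    and P0: "P 0 = 0" and R: "0 \<le> R" "R < 1"
  shows "(LINT x:ball (0::'a::euclidean_space) R|lborel. h (norm x)) = P R"
proof -
  define A where "A = (\<lambda>s. LINT x:ball (0::'a) s|lborel. h (norm x))"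
  have "\<exists>c. \<forall>s\<in>{0..R}. A s - P s = c"
  proof (rule has_field_derivative_zero_constant)
    fix s assume s: "s \<in> {0..R}"
    have "(A has_real_derivative h s * (unit_ball_vol DIM('a) * (DIM('a) * s ^ (DIM('a) - 1))))
        (at s within {0..R})"
      unfolding A_def
      by (rule has_field_derivative_subset[OF ball_integral_radial_has_real_derivative[OF h]])
        (use s R in auto)
    from DERIV_diff[OF this P'] s
    show "((\<lambda>s. A s - P s) has_real_derivative 0) (at s within {0..R})" by simp
  qed auto
  then obtain c where c: "\<And>s. s \<in> {0..R} \<Longrightarrow> A s - P s = c" by blast
  have "A 0 = 0" by (simp add: A_def set_lebesgue_integral_def)
  then show ?thesis using c[of 0] c[of R] P0 R by (simp add: A_def)
qed

section \<open>Radial coordinates in the Poincare ball\<close>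

definition hlam_radial :: "real \<Rightarrow> real" where
  "hlam_radial u = 2 * u / (1 - u\<^sup>2)"

definition hlam'_radial :: "real \<Rightarrow> real" where
  "hlam'_radial u = (1 + u\<^sup>2) / (1 - u\<^sup>2)"

definition hyp_radial_density :: "nat \<Rightarrow> (real \<Rightarrow> real) \<Rightarrow> real \<Rightarrow> real" where
  "hyp_radial_density m k u = k (hlam_radial u) * hlam'_radial u * (2 / (1 - u\<^sup>2)) ^ m"

lemma one_minus_square_pos: "0 \<le> u \<Longrightarrow> u < 1 \<Longrightarrow> 1 - u\<^sup>2 > (0::real)"
  by (simp add: abs_square_less_1)

lemma hlam_eq_radial:
  assumes "norm x < 1"
  shows "hlam x = hlam_radial (norm x)"
proof -
  define u where "u = norm x"
  have u: "0 \<le> u" "u < 1" using assms by (auto simp: u_def)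
  then have "1 - u * u \<noteq> 0" using mult_strict_mono[of u 1 u 1] by auto
  then have "((1 + u) / (1 - u) - inverse ((1 + u) / (1 - u))) / 2 = hlam_radial u"
    using u by (simp add: hlam_radial_def field_simps power2_eq_square)
  then show ?thesis
    unfolding hlam_def hdist0_def u_def[symmetric] using u by (subst sinh_ln_real) auto
qed

lemma hlam'_eq_radial:
  assumes "norm x < 1"
  shows "hlam' x = hlam'_radial (norm x)"
proof -
  define u where "u = norm x"
  have u: "0 \<le> u" "u < 1" using assms by (auto simp: u_def)
  then have "1 - u * u \<noteq> 0" using mult_strict_mono[of u 1 u 1] by auto
  then have "((1 + u) / (1 - u) + inverse ((1 + u) / (1 - u))) / 2 = hlam'_radial u"
    using u by (simp add: hlam'_radial_def field_simps power2_eq_square)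
  then show ?thesis
    unfolding hlam'_def hdist0_def u_def[symmetric] using u by (subst cosh_ln_real) auto
qed

lemma hyp_integrand_eq_radial:
  "norm (x::'a::euclidean_space) < 1 \<Longrightarrow>
     k (hlam x) * hlam' x * hdens x = hyp_radial_density DIM('a) k (norm x)"
  by (simp add: hlam_eq_radial hlam'_eq_radial hdens_def hyp_radial_density_def)

lemma hlam_radial_has_real_derivative:
  assumes "\<bar>u\<bar> < 1"
  shows "(hlam_radial has_real_derivative 2 * (1 + u\<^sup>2) / (1 - u\<^sup>2)\<^sup>2) (at u)"
proof -
  have "1 - u\<^sup>2 \<noteq> 0" using assms abs_square_less_1[of u] by auto
  then show ?thesis
    unfolding hlam_radial_def[abs_def]
    by (auto intro!: derivative_eq_intros simp: power2_eq_square algebra_simps)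
qed

lemma continuous_on_hlam_radial: "continuous_on {0..<1} hlam_radial"
  unfolding hlam_radial_def[abs_def]
  by (intro continuous_intros) (auto simp: power2_eq_1_iff)

lemma continuous_on_hyp_radial_density:
  assumes "continuous_on UNIV k"
  shows "continuous_on {0..<1} (hyp_radial_density m k)"
proof -
  have "continuous_on {0..<1} (\<lambda>u. k (hlam_radial u))"
    by (rule continuous_on_compose2[OF assms continuous_on_hlam_radial]) auto
  then show ?thesis
    unfolding hyp_radial_density_def[abs_def] hlam'_radial_def
    by (intro continuous_intros) (auto simp: power2_eq_1_iff)
qed

lemma hlam_radial_mono: "0 \<le> u \<Longrightarrow> u \<le> v \<Longrightarrow> v < 1 \<Longrightarrow> hlam_radial u \<le> hlam_radial v"
  unfolding hlam_radial_def
  by (rule frac_le) (auto intro!: power_mono one_minus_square_pos simp: abs_square_less_1)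

lemma hlam_radial_strict_mono: "0 \<le> u \<Longrightarrow> u < v \<Longrightarrow> v < 1 \<Longrightarrow> hlam_radial u < hlam_radial v"
  unfolding hlam_radial_def
  by (rule frac_less) (auto intro!: power_mono one_minus_square_pos simp: abs_square_less_1)

lemma hlam_radial_nonneg: "0 \<le> u \<Longrightarrow> u < 1 \<Longrightarrow> 0 \<le> hlam_radial u"
  using hlam_radial_mono[of 0 u] by (simp add: hlam_radial_def)

lemma hlam_radial_surj:
  assumes "0 \<le> t"
  obtains u where "0 \<le> u" "u < 1" "hlam_radial u = t"
proof
  define q where "q = sqrt (1 + t\<^sup>2)"
  have q: "q\<^sup>2 = 1 + t\<^sup>2" "t < q" "0 \<le> q"
    using real_sqrt_less_mono[of "t\<^sup>2" "1 + t\<^sup>2"] assms by (auto simp: q_def)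
  show "0 \<le> t / (1 + q)" "t / (1 + q) < 1" using assms q by auto
  have "(1 + q)\<^sup>2 - t\<^sup>2 = 2 * (1 + q)" using q(1) by (simp add: power2_sum algebra_simps)
  moreover have "1 - (t / (1 + q))\<^sup>2 = ((1 + q)\<^sup>2 - t\<^sup>2) / (1 + q)\<^sup>2"
    using q by (simp add: power_divide field_simps)
  moreover have "2 * (1 + q) / (1 + q)\<^sup>2 = 2 / (1 + q)"
    using q by (simp add: power2_eq_square divide_simps)
  ultimately have "1 - (t / (1 + q))\<^sup>2 = 2 / (1 + q)" by simp
  then show "hlam_radial (t / (1 + q)) = t"
    unfolding hlam_radial_def using q by (simp add: field_simps)
qed

lemma sphere_area_eq_unit_ball_vol:
  assumes "m \<ge> 1"
  shows "sphere_area (m - 1) = real m * unit_ball_vol (real m)"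
proof -
  have m: "real (m - 1) + 1 = real m" using assms by simp
  have "real m / 2 \<notin> \<int>\<^sub>\<le>\<^sub>0" using assms by (auto dest: nonpos_Ints_nonpos)
  then have Gamma: "Gamma (real m / 2 + 1) = real m / 2 * Gamma (real m / 2)" by (rule Gamma_plus1)
  have "Gamma (real m / 2) > 0" using assms by auto
  then show ?thesis
    unfolding sphere_area_def unit_ball_vol_def m Gamma using assms by (simp add: field_simps)
qed

lemma hlam_radial_power_mult_deriv:
  assumes "0 \<le> r" "r < 1"
  shows "hlam_radial r ^ n * (2 * (1 + r\<^sup>2) / (1 - r\<^sup>2)\<^sup>2)
           = hlam'_radial r * (2 / (1 - r\<^sup>2)) ^ Suc n * r ^ n"
proof -
  have "(2 * r / w) ^ n * (2 * (1 + r\<^sup>2) / w\<^sup>2) = (1 + r\<^sup>2) / w * (2 / w) ^ Suc n * r ^ n"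
    if "w \<noteq> 0" for w :: real
    using that by (simp add: power_divide power_mult_distrib field_simps power2_eq_square)
  then show ?thesis
    unfolding hlam_radial_def hlam'_radial_def using one_minus_square_pos[OF assms] by simp
qed

lemma hyp_integral_ball:
  fixes k :: "real \<Rightarrow> real" and R :: real
  assumes k: "continuous_on UNIV k" and R: "0 \<le> R" "R < 1"
  shows "hyp_integral (ball (0::'a::euclidean_space) R) (\<lambda>x. k (hlam x) * hlam' x)
           = sphere_area (DIM('a) - 1) * integral {0..hlam_radial R} (\<lambda>s. k s * s ^ (DIM('a) - 1))"
proof -
  define n where "n = DIM('a) - 1"
  have DIM: "DIM('a) = Suc n" by (simp add: n_def)
  define g where "g = (\<lambda>s. k s * s ^ n)"
  have g: "continuous_on UNIV g" unfolding g_def by (intro continuous_intros k)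
  define P where "P = (\<lambda>u. sphere_area n * integral {0..hlam_radial u} g)"
  have "hyp_integral (ball (0::'a) R) (\<lambda>x. k (hlam x) * hlam' x)
        = (LINT x:ball (0::'a) R|lborel. hyp_radial_density DIM('a) k (norm x))"
    unfolding hyp_integral_def
    by (rule set_lebesgue_integral_cong) (use R in \<open>auto simp: hyp_integrand_eq_radial\<close>)
  also have "\<dots> = P R"
  proof (rule ball_integral_radial[OF continuous_on_hyp_radial_density[OF k] _ _ R])
    show "P 0 = 0" by (simp add: P_def hlam_radial_def)
    fix r :: real assume r: "0 \<le> r" "r \<le> R"
    have "((\<lambda>t. integral {0..t} g) has_real_derivative g (hlam_radial r))
        (at (hlam_radial r) within {0..hlam_radial R})"
      using r R hlam_radial_mono hlam_radial_nonneg
      by (intro integral_has_real_derivative) (auto intro: continuous_on_subset[OF g])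
    then have "((\<lambda>t. integral {0..t} g) has_real_derivative g (hlam_radial r))
        (at (hlam_radial r) within hlam_radial ` {0..R})"
    proof (rule has_field_derivative_subset)
      show "hlam_radial ` {0..R} \<subseteq> {0..hlam_radial R}"
        using R hlam_radial_mono hlam_radial_nonneg by auto
    qed
    moreover have "(hlam_radial has_real_derivative 2 * (1 + r\<^sup>2) / (1 - r\<^sup>2)\<^sup>2) (at r within {0..R})"
      by (rule has_field_derivative_at_within[OF hlam_radial_has_real_derivative]) (use r R in auto)
    ultimately have "(P has_real_derivative sphere_area n *
        (g (hlam_radial r) * (2 * (1 + r\<^sup>2) / (1 - r\<^sup>2)\<^sup>2))) (at r within {0..R})"
      unfolding P_def by (intro DERIV_cmult) (rule DERIV_image_chain[unfolded o_def])
    moreover have "sphere_area n * (g (hlam_radial r) * (2 * (1 + r\<^sup>2) / (1 - r\<^sup>2)\<^sup>2))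
        = hyp_radial_density DIM('a) k r * (unit_ball_vol DIM('a) * (DIM('a) * r ^ (DIM('a) - 1)))"
    proof -
      have "sphere_area n = real DIM('a) * unit_ball_vol DIM('a)"
        using sphere_area_eq_unit_ball_vol[of "DIM('a)"] by (simp add: n_def)
      moreover have "hlam_radial r ^ n * (2 * (1 + r\<^sup>2) / (1 - r\<^sup>2)\<^sup>2)
          = hlam'_radial r * (2 / (1 - r\<^sup>2)) ^ Suc n * r ^ n"
        by (rule hlam_radial_power_mult_deriv) (use r R in auto)
      then have "g (hlam_radial r) * (2 * (1 + r\<^sup>2) / (1 - r\<^sup>2)\<^sup>2)
          = k (hlam_radial r) * (hlam'_radial r * (2 / (1 - r\<^sup>2)) ^ DIM('a) * r ^ n)"
        by (simp only: g_def DIM mult.assoc)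
      ultimately show ?thesis
        by (simp add: hyp_radial_density_def DIM mult_ac)
    qed
    ultimately show "(P has_real_derivative hyp_radial_density DIM('a) k r *
        (unit_ball_vol DIM('a) * (DIM('a) * r ^ (DIM('a) - 1)))) (at r within {0..R})"
      by simp
  qed
  finally show ?thesis by (simp add: P_def g_def n_def)
qed

lemma hyp_set_integrable:
  fixes k :: "real \<Rightarrow> real"
  assumes k: "continuous_on UNIV k" and b: "b < 1" and S: "S \<in> sets lborel" "S \<subseteq> cball 0 b"
  shows "set_integrable lborel S (\<lambda>x::'a::euclidean_space. k (hlam x) * hlam' x * hdens x)"
proof -
  have "set_integrable lborel S (\<lambda>x::'a. hyp_radial_density DIM('a) k (norm x))"
    by (rule set_integrable_radial[OF continuous_on_hyp_radial_density[OF k] b S])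
  moreover have "hyp_radial_density DIM('a) k (norm x) = k (hlam x) * hlam' x * hdens x"
    if "x \<in> S" for x :: 'a
    using that S(2) b by (auto simp: subset_iff hyp_integrand_eq_radial)
  ultimately show ?thesis
    using set_integrable_cong[of lborel lborel S S "\<lambda>x. hyp_radial_density DIM('a) k (norm x)"
        "\<lambda>x. k (hlam x) * hlam' x * hdens x"] by simp
qed

lemma hlam_nonneg: "norm x < 1 \<Longrightarrow> 0 \<le> hlam x"
  by (simp add: hlam_eq_radial hlam_radial_nonneg)

lemma hlam'_pos: "norm x < 1 \<Longrightarrow> 0 < hlam' x"
  using one_minus_square_pos[of "norm x"]
  by (auto simp: hlam'_eq_radial hlam'_radial_def intro!: divide_pos_pos add_pos_nonneg)

lemma hdens_pos: "norm x < 1 \<Longrightarrow> 0 < hdens x"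
  using one_minus_square_pos[of "norm x"] by (simp add: hdens_def)

lemma continuous_on_hlam: "continuous_on (ball 0 1) (hlam :: 'a::euclidean_space \<Rightarrow> real)"
proof -
  have "continuous_on (ball (0::'a) 1) (\<lambda>x. hlam_radial (norm x))"
    by (rule continuous_on_compose2[OF continuous_on_hlam_radial continuous_on_norm_id]) auto
  then show ?thesis by (rule continuous_on_eq) (simp add: hlam_eq_radial)
qed

definition euclid_radius :: "real \<Rightarrow> real" where
  "euclid_radius \<rho> = (exp \<rho> - 1) / (exp \<rho> + 1)"

lemma euclid_radius_less_1: "euclid_radius \<rho> < 1"
  unfolding euclid_radius_def by (simp add: add_pos_pos)

lemma euclid_radius_pos: "0 < \<rho> \<Longrightarrow> 0 < euclid_radius \<rho>"
  unfolding euclid_radius_def by (simp add: add_pos_pos)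

lemma hdist0_less_iff:
  assumes "norm x < 1"
  shows "hdist0 x < \<rho> \<longleftrightarrow> norm x < euclid_radius \<rho>"
    and "hdist0 x \<le> \<rho> \<longleftrightarrow> norm x \<le> euclid_radius \<rho>"
proof -
  define u where "u = norm x"
  have u: "0 \<le> u" "u < 1" using assms by (auto simp: u_def)
  have exp_hdist0: "exp (hdist0 x) = (1 + u) / (1 - u)"
    unfolding hdist0_def u_def[symmetric] using u by simp
  have "hdist0 x < \<rho> \<longleftrightarrow> (1 + u) / (1 - u) < exp \<rho>"
    by (simp flip: exp_hdist0)
  also have "\<dots> \<longleftrightarrow> u * (exp \<rho> + 1) < exp \<rho> - 1"
    using u by (simp add: divide_less_eq algebra_simps)
  finally show "hdist0 x < \<rho> \<longleftrightarrow> norm x < euclid_radius \<rho>"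
    unfolding euclid_radius_def u_def by (simp add: less_divide_eq add_pos_pos)
  have "hdist0 x \<le> \<rho> \<longleftrightarrow> (1 + u) / (1 - u) \<le> exp \<rho>"
    by (simp flip: exp_hdist0)
  also have "\<dots> \<longleftrightarrow> u * (exp \<rho> + 1) \<le> exp \<rho> - 1"
    using u by (simp add: divide_le_eq algebra_simps)
  finally show "hdist0 x \<le> \<rho> \<longleftrightarrow> norm x \<le> euclid_radius \<rho>"
    unfolding euclid_radius_def u_def by (simp add: le_divide_eq add_pos_pos)
qed

lemma hyp_ball0_eq_ball: "hyp_ball0 \<rho> = ball (0::'a::euclidean_space) (euclid_radius \<rho>)"
proof -
  have "x \<in> hyp_ball0 \<rho> \<longleftrightarrow> x \<in> ball 0 (euclid_radius \<rho>)" for x :: 'a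
    using hdist0_less_iff(1)[of x \<rho>] euclid_radius_less_1[of \<rho>]
    by (cases "norm x < 1") (auto simp: hyp_ball0_def poincare_ball_def)
  then show ?thesis by blast
qed

lemma ball_eq_hyp_ball0:
  assumes "0 < R" "R < 1"
  shows "\<exists>\<rho>>0. ball (0::'a::euclidean_space) R = hyp_ball0 \<rho>"
proof (intro exI conjI)
  show "0 < ln ((1 + R) / (1 - R))" using assms by (intro ln_gt_zero) (simp add: less_divide_eq)
  have "euclid_radius (ln ((1 + R) / (1 - R))) = R"
    using assms unfolding euclid_radius_def by (simp add: field_simps)
  then show "ball 0 R = hyp_ball0 (ln ((1 + R) / (1 - R)))" by (simp add: hyp_ball0_eq_ball)
qed

lemma hyp_bounded_domain_subset_cball:
  assumes "hyp_bounded_domain \<Omega>"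
  obtains b where "b < 1" "\<Omega> \<subseteq> cball 0 b"
proof -
  obtain \<rho> where \<rho>: "\<And>x. x \<in> \<Omega> \<Longrightarrow> hdist0 x \<le> \<rho>" and \<Omega>: "\<Omega> \<subseteq> ball 0 1"
    using assms by (auto simp: hyp_bounded_domain_def poincare_ball_def)
  have "\<Omega> \<subseteq> cball 0 (euclid_radius \<rho>)"
  proof
    fix x assume "x \<in> \<Omega>"
    then show "x \<in> cball 0 (euclid_radius \<rho>)" using \<rho> \<Omega> hdist0_less_iff(2)[of x \<rho>] by auto
  qed
  then show thesis using that euclid_radius_less_1 by blast
qed

section \<open>Null sets, exchange of mass, regular open sets\<close>

lemma open_null_set_lborel_empty:
  fixes U :: "'a::euclidean_space set"
  assumes "open U" "U \<in> null_sets lborel"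
  shows "U = {}"
proof -
  have "AE x in lebesgue. x \<notin> U"
    using AE_not_in[OF assms(2)] by (rule AE_completion)
  then have "AE x \<in> U in lebesgue. x \<in> {}" by eventually_elim auto
  then show ?thesis using mem_closed_if_AE_lebesgue_open[OF assms(1) closed_empty] by blast
qed

lemma open_subset_empty_if_set_integral_eq_0:
  fixes f :: "'a::euclidean_space \<Rightarrow> real"
  assumes f: "set_integrable lborel S f" "\<And>x. x \<in> S \<Longrightarrow> 0 \<le> f x" "(LINT x:S|lborel. f x) = 0"
    and U: "open U" "U \<subseteq> S" "\<And>x. x \<in> U \<Longrightarrow> 0 < f x"
  shows "U = {}"
proof -
  have "AE x in lborel. indicator S x * f x = 0"
    using f by (subst integral_nonneg_eq_0_iff_AE[symmetric])
      (auto simp: set_integrable_def set_lebesgue_integral_def indicator_def)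
  then have "AE x in lborel. x \<notin> U"
    by eventually_elim (use U in \<open>force simp: indicator_def\<close>)
  then have "U \<in> null_sets lborel"
    using U(1) by (simp add: AE_iff_null_sets)
  then show ?thesis using U(1) by (rule open_null_set_lborel_empty[rotated])
qed

lemma set_integral_nonneg:
  fixes f :: "'a \<Rightarrow> real"
  assumes "\<And>x. x \<in> A \<Longrightarrow> 0 \<le> f x"
  shows "0 \<le> (LINT x:A|M. f x)"
  unfolding set_lebesgue_integral_def using assms
  by (intro integral_nonneg_AE) (auto simp: indicator_def)

lemma set_integral_exchange:
  fixes f w :: "'a \<Rightarrow> real"
  assumes A: "A \<in> sets M" and B: "B \<in> sets M"
    and fw: "set_integrable M (A \<union> B) (\<lambda>x. f x * w x)" and w: "set_integrable M (A \<union> B) w"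
    and mass: "(LINT x:A|M. w x) = (LINT x:B|M. w x)"
  shows "(LINT x:A|M. f x * w x) - (LINT x:B|M. f x * w x)
           = (LINT x:A - B|M. (f x - c) * w x) + (LINT x:B - A|M. (c - f x) * w x)"
proof -
  define h where "h x = (f x - c) * w x" for x
  have h: "set_integrable M (A \<union> B) h"
    unfolding h_def left_diff_distrib using fw w by (intro set_integral_diff(1)) auto
  have int: "set_integrable M S g" if "S \<in> sets M" "S \<subseteq> A \<union> B" "set_integrable M (A \<union> B) g"
    for S and g :: "'a \<Rightarrow> real"
    using set_integrable_subset[OF that(3) that(1,2)] .
  have split: "(LINT x:S|M. f x * w x) = (LINT x:S|M. h x) + c * (LINT x:S|M. w x)"
    if "S \<in> sets M" "S \<subseteq> A \<union> B" for S
    using set_integral_add(2)[OF int[OF that h] set_integrable_mult_right[OF int[OF that w]], of c]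
    by (simp add: h_def algebra_simps)
  have union: "(LINT x:S \<union> T|M. h x) = (LINT x:S|M. h x) + (LINT x:T|M. h x)"
    if "S \<in> sets M" "T \<in> sets M" "S \<union> T \<subseteq> A \<union> B" "S \<inter> T = {}" for S T
    using set_integral_Un[OF that(4) int[OF that(1) _ h] int[OF that(2) _ h]] that(3) by auto
  have "A \<inter> B \<union> (A - B) = A" "A \<inter> B \<union> (B - A) = B"
    and "A \<inter> B \<inter> (A - B) = {}" "A \<inter> B \<inter> (B - A) = {}" by auto
  then have "(LINT x:A|M. h x) - (LINT x:B|M. h x) = (LINT x:A - B|M. h x) - (LINT x:B - A|M. h x)"
    using union[of "A \<inter> B" "A - B"] union[of "A \<inter> B" "B - A"] A B by auto
  moreover have "(LINT x:B - A|M. (c - f x) * w x) = - (LINT x:B - A|M. h x)"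
    using set_integral_uminus[OF int[OF _ _ h, of "B - A"]] A B by (auto simp: h_def algebra_simps)
  ultimately show ?thesis
    using split[of A] split[of B] mass A B by (simp add: h_def)
qed

lemma regular_open_eq_ball:
  fixes S :: "'a::{real_normed_vector, perfect_space} set"
  assumes "open S" "interior (closure S) = S" "S \<subseteq> cball x r" "ball x r \<subseteq> closure S"
  shows "S = ball x r"
proof
  show "S \<subseteq> ball x r"
    using interior_mono[OF assms(3)] interior_open[OF assms(1)] by simp
  show "ball x r \<subseteq> S"
    using interior_mono[OF assms(4)] assms(2) by simp
qed

lemma integral_from_0_surj:
  fixes g :: "real \<Rightarrow> real"
  assumes g: "continuous_on UNIV g" and nonneg: "\<And>s. 0 \<le> s \<Longrightarrow> 0 \<le> g s"
    and lower: "\<And>s. 1 \<le> s \<Longrightarrow> a \<le> g s" and a: "0 < a" and y: "0 \<le> y"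
  obtains t where "0 \<le> t" "integral {0..t} g = y"
proof -
  have int: "g integrable_on {u..v}" for u v
    by (rule integrable_continuous_interval) (rule continuous_on_subset[OF g], auto)
  define T where "T = 1 + y / a"
  have T: "1 \<le> T" using y a by (simp add: T_def)
  have "y = integral {1..T} (\<lambda>_. a)" using a T by (simp add: T_def)
  also have "\<dots> \<le> integral {1..T} g"
    by (rule integral_le[OF integrable_const_ivl int]) (use lower in auto)
  also have "\<dots> \<le> integral {0..1} g + integral {1..T} g"
    using Henstock_Kurzweil_Integration.integral_nonneg[OF int, of 0 1] nonneg by simp
  also have "\<dots> = integral {0..T} g"
    by (rule Henstock_Kurzweil_Integration.integral_combine[OF _ _ int]) (use T in auto)
  finally have "y \<le> integral {0..T} g" .
  moreover have "continuous_on {0..T} (\<lambda>t. integral {0..t} g)"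
    by (intro indefinite_integral_continuous_1 int)
  ultimately obtain t where "0 \<le> t" "t \<le> T" "integral {0..t} g = y"
    using IVT'[of "\<lambda>t. integral {0..t} g" 0 y T] y T by auto
  then show thesis using that by blast
qed

section \<open>Log-convex even weights\<close>

locale log_convex_weight =
  fixes \<phi> :: "real \<Rightarrow> real"
  assumes smooth: "smooth_fun \<phi>"
    and pos: "\<And>s. \<phi> s > 0"
    and even: "\<And>s. \<phi> (- s) = \<phi> s"
    and log_convex: "\<And>s. deriv (deriv (\<lambda>u. ln (\<phi> u))) s \<ge> 0"
begin

definition logderiv :: "real \<Rightarrow> real" where
  "logderiv s = deriv \<phi> s / \<phi> s"

definition elasticity :: "real \<Rightarrow> real" where
  "elasticity s = s * logderiv s"

lemma phi_has_real_derivative: "(\<phi> has_real_derivative deriv \<phi> x) (at x)"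
  using smooth unfolding smooth_fun_def
  by (metis DERIV_deriv_iff_real_differentiable funpow_0)

lemma deriv_phi_has_real_derivative: "(deriv \<phi> has_real_derivative deriv (deriv \<phi>) x) (at x)"
  using smooth unfolding smooth_fun_def
  by (metis DERIV_deriv_iff_real_differentiable funpow_0 funpow_Suc_right o_apply)

lemma continuous_on_phi: "continuous_on UNIV \<phi>"
  using phi_has_real_derivative by (meson DERIV_continuous continuous_at_imp_continuous_on)

lemma continuous_on_deriv_phi: "continuous_on UNIV (deriv \<phi>)"
  using deriv_phi_has_real_derivative
  by (meson DERIV_continuous continuous_at_imp_continuous_on)

lemma continuous_on_logderiv: "continuous_on UNIV logderiv"
  unfolding logderiv_def[abs_def] using continuous_on_phi continuous_on_deriv_phi pos
  by (intro continuous_intros) (auto simp: less_imp_neq[symmetric])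

lemma continuous_on_elasticity: "continuous_on UNIV elasticity"
  unfolding elasticity_def[abs_def] by (intro continuous_intros continuous_on_logderiv)

lemma deriv_phi_0: "deriv \<phi> 0 = 0"
proof -
  have "((\<lambda>s. \<phi> (- s)) has_real_derivative deriv \<phi> (- 0) * (- 1)) (at 0)"
    by (rule DERIV_chain2[OF phi_has_real_derivative]) (auto intro!: derivative_eq_intros)
  then have "(\<phi> has_real_derivative - deriv \<phi> 0) (at 0)" using even by simp
  from DERIV_unique[OF this phi_has_real_derivative] show ?thesis by simp
qed

lemma deriv_ln_phi: "deriv (\<lambda>u. ln (\<phi> u)) = logderiv"
proof
  fix s
  have "((\<lambda>u. ln (\<phi> u)) has_real_derivative 1 / \<phi> s * deriv \<phi> s) (at s)"
    using DERIV_chain2[OF DERIV_ln[OF pos] phi_has_real_derivative] by (simp add: inverse_eq_divide)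
  then show "deriv (\<lambda>u. ln (\<phi> u)) s = logderiv s" by (simp add: DERIV_imp_deriv logderiv_def)
qed

lemma logderiv_mono:
  assumes "a \<le> b"
  shows "logderiv a \<le> logderiv b"
proof (rule DERIV_nonneg_imp_nondecreasing[OF assms])
  fix x
  have "(logderiv has_real_derivative
      (deriv (deriv \<phi>) x * \<phi> x - deriv \<phi> x * deriv \<phi> x) / (\<phi> x * \<phi> x)) (at x)"
    unfolding logderiv_def[abs_def]
    by (rule DERIV_divide[OF deriv_phi_has_real_derivative phi_has_real_derivative])
      (use pos in \<open>auto simp: less_imp_neq[symmetric]\<close>)
  then have "(logderiv has_real_derivative deriv logderiv x) (at x)" by (metis DERIV_imp_deriv)
  then show "\<exists>y. (logderiv has_real_derivative y) (at x) \<and> y \<ge> 0"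
    using log_convex[of x] by (auto simp: deriv_ln_phi)
qed

lemma logderiv_nonneg: "0 \<le> s \<Longrightarrow> 0 \<le> logderiv s"
  using logderiv_mono[of 0 s] by (simp add: logderiv_def deriv_phi_0)

lemma deriv_phi_eq: "deriv \<phi> s = logderiv s * \<phi> s"
  using pos[of s] by (simp add: logderiv_def)

lemma phi_mono:
  assumes "0 \<le> a" "a \<le> b"
  shows "\<phi> a \<le> \<phi> b"
proof (rule DERIV_nonneg_imp_nondecreasing[OF assms(2)])
  fix x assume "a \<le> x"
  then have "0 \<le> deriv \<phi> x"
    using assms logderiv_nonneg[of x] pos[of x] by (simp add: deriv_phi_eq)
  then show "\<exists>y. (\<phi> has_real_derivative y) (at x) \<and> y \<ge> 0"
    using phi_has_real_derivative by blast
qed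

lemma phi_eq_phi_0:
  assumes "0 \<le> t" "logderiv t = 0"
  shows "\<phi> t = \<phi> 0"
proof -
  have "\<exists>c. \<forall>s\<in>{0..t}. \<phi> s = c"
  proof (rule has_field_derivative_zero_constant)
    fix s assume s: "s \<in> {0..t}"
    then have "logderiv s = 0"
      using logderiv_nonneg[of s] logderiv_mono[of s t] assms by auto
    then show "(\<phi> has_real_derivative 0) (at s within {0..t})"
      using has_field_derivative_at_within[OF phi_has_real_derivative[of s]] by (simp add: deriv_phi_eq)
  qed auto
  then show ?thesis using assms by auto
qed

lemma elasticity_mono: "0 \<le> s \<Longrightarrow> s \<le> s' \<Longrightarrow> elasticity s \<le> elasticity s'"
  unfolding elasticity_def by (rule mult_mono) (use logderiv_mono logderiv_nonneg in auto)

lemma elasticity_strict_mono: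
  assumes "0 \<le> s" "s < s'" "0 < logderiv s'"
  shows "elasticity s < elasticity s'"
proof -
  have "s * logderiv s \<le> s * logderiv s'" using assms logderiv_mono by (simp add: mult_left_mono)
  also have "\<dots> < s' * logderiv s'" using assms by simp
  finally show ?thesis by (simp add: elasticity_def)
qed

definition volume_density :: "'a::euclidean_space \<Rightarrow> real" where
  "volume_density x = \<phi> (hlam x) * hlam' x * hdens x"

abbreviation phi_volume :: "'a::euclidean_space set \<Rightarrow> real" where
  "phi_volume S \<equiv> hyp_integral S (\<lambda>x. \<phi> (hlam x) * hlam' x)"

abbreviation phi_moment :: "'a::euclidean_space set \<Rightarrow> real" where
  "phi_moment S \<equiv> hyp_integral S (\<lambda>x. deriv \<phi> (hlam x) * hlam' x * hlam x)"

lemma phi_volume_eq: "phi_volume S = (LINT x:S|lborel. volume_density x)"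
  by (simp add: hyp_integral_def volume_density_def)

lemma phi_moment_eq: "phi_moment S = (LINT x:S|lborel. elasticity (hlam x) * volume_density x)"
  by (simp add: hyp_integral_def volume_density_def elasticity_def deriv_phi_eq mult_ac)

lemma volume_density_pos: "norm x < 1 \<Longrightarrow> 0 < volume_density x"
  by (simp add: volume_density_def pos hlam'_pos hdens_pos)

lemma set_integrable_volume_density:
  assumes q: "continuous_on UNIV q" and S: "S \<in> sets lborel" "S \<subseteq> cball 0 b" and b: "b < 1"
  shows "set_integrable lborel S (\<lambda>x::'a::euclidean_space. q (hlam x) * volume_density x)"
proof -
  have "continuous_on UNIV (\<lambda>s. q s * \<phi> s)" by (intro continuous_intros q continuous_on_phi)
  from hyp_set_integrable[OF this b S] show ?thesis by (simp add: volume_density_def mult_ac)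
qed

lemma phi_volume_ball:
  "0 \<le> R \<Longrightarrow> R < 1 \<Longrightarrow> phi_volume (ball (0::'a::euclidean_space) R)
     = sphere_area (DIM('a) - 1) * integral {0..hlam_radial R} (\<lambda>s. \<phi> s * s ^ (DIM('a) - 1))"
  by (rule hyp_integral_ball[OF continuous_on_phi])

lemma phi_moment_ball:
  assumes "0 \<le> R" "R < 1"
  shows "phi_moment (ball (0::'a::euclidean_space) R)
     = sphere_area (DIM('a) - 1) * integral {0..hlam_radial R} (\<lambda>s. deriv \<phi> s * s ^ DIM('a))"
proof -
  have "continuous_on UNIV (\<lambda>s. deriv \<phi> s * s)" by (intro continuous_intros continuous_on_deriv_phi)
  from hyp_integral_ball[OF this assms, where 'a='a]
  have "phi_moment (ball (0::'a) R) = sphere_area (DIM('a) - 1) *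
      integral {0..hlam_radial R} (\<lambda>s. deriv \<phi> s * (s * s ^ (DIM('a) - 1)))"
    by (simp add: mult_ac)
  moreover have "s * s ^ (DIM('a) - 1) = s ^ DIM('a)" for s :: real
    using DIM_positive[where 'a='a] by (cases "DIM('a)") auto
  ultimately show ?thesis by simp
qed

lemma exists_ball_same_phi_volume:
  fixes S :: "'a::euclidean_space set"
  assumes S: "S \<in> sets lborel" "S \<subseteq> cball 0 b" and b: "b < 1"
  obtains R where "0 \<le> R" "R < 1" "phi_volume (ball (0::'a) R) = phi_volume S"
proof -
  define n where "n = DIM('a) - 1"
  define \<omega> where "\<omega> = sphere_area n"
  have \<omega>: "0 < \<omega>" using sphere_area_eq_unit_ball_vol[of "DIM('a)"] by (simp add: \<omega>_def n_def)
  have "norm x < 1" if "x \<in> S" for x :: 'a using that S b by (auto simp: subset_iff)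
  then have "0 \<le> phi_volume S"
    unfolding phi_volume_eq by (intro set_integral_nonneg less_imp_le volume_density_pos)
  obtain t where t: "0 \<le> t" "integral {0..t} (\<lambda>s. \<phi> s * s ^ n) = phi_volume S / \<omega>"
  proof (rule integral_from_0_surj[where y = "phi_volume S / \<omega>"])
    show "continuous_on UNIV (\<lambda>s. \<phi> s * s ^ n)" by (intro continuous_intros continuous_on_phi)
    show "0 \<le> \<phi> s * s ^ n" if "0 \<le> s" for s using that pos[of s] by simp
    show "\<phi> 0 \<le> \<phi> s * s ^ n" if "1 \<le> s" for s
      using phi_mono[of 0 s] pos[of s] that by (simp add: order_trans[OF _ mult_left_mono[of 1]] one_le_power)
  qed (use pos \<omega> \<open>0 \<le> phi_volume S\<close> in auto)
  obtain R where R: "0 \<le> R" "R < 1" "hlam_radial R = t" using hlam_radial_surj[OF t(1)] .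
  show thesis
    by (rule that[OF R(1,2)]) (use \<omega> t R in \<open>simp add: phi_volume_ball \<omega>_def n_def\<close>)
qed

lemma phi_moment_minus_ball:
  fixes S :: "'a::euclidean_space set"
  assumes S: "S \<in> sets lborel" "S \<subseteq> cball 0 b" "b < 1" and R: "0 \<le> R" "R < 1"
    and vol: "phi_volume (ball (0::'a) R) = phi_volume S"
  defines "c \<equiv> elasticity (hlam_radial R)"
  shows "phi_moment S - phi_moment (ball (0::'a) R)
           = (LINT x:S - ball 0 R|lborel. (elasticity (hlam x) - c) * volume_density x)
             + (LINT x:ball 0 R - S|lborel. (c - elasticity (hlam x)) * volume_density x)"
proof -
  have sub: "S \<union> ball 0 R \<subseteq> cball 0 (max b R)" using S by auto
  have "max b R < 1" using S R by simp
  note int = set_integrable_volume_density[OF _ _ sub this]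
  show ?thesis
    unfolding phi_moment_eq
  proof (rule set_integral_exchange)
    show "set_integrable lborel (S \<union> ball 0 R) (\<lambda>x. elasticity (hlam x) * volume_density x)"
      using S by (intro int continuous_on_elasticity) auto
    show "set_integrable lborel (S \<union> ball 0 R) volume_density"
      using int[of "\<lambda>_. 1"] S by auto
    show "(LINT x:S|lborel. volume_density x) = (LINT x:ball (0::'a) R|lborel. volume_density x)"
      using vol unfolding phi_volume_eq by (rule sym)
  qed (use S in auto)
qed

lemma excess_nonneg:
  assumes "0 \<le> R" "R \<le> norm x" "norm x < 1"
  shows "0 \<le> (elasticity (hlam x) - elasticity (hlam_radial R)) * volume_density x"
proof -
  have "elasticity (hlam_radial R) \<le> elasticity (hlam_radial (norm x))"
    using assms by (intro elasticity_mono hlam_radial_nonneg hlam_radial_mono) auto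
  then show ?thesis using volume_density_pos[of x] assms by (simp add: hlam_eq_radial)
qed

lemma deficit_nonneg:
  assumes "norm x \<le> R" "R < 1"
  shows "0 \<le> (elasticity (hlam_radial R) - elasticity (hlam x)) * volume_density x"
proof -
  have "elasticity (hlam_radial (norm x)) \<le> elasticity (hlam_radial R)"
    using assms by (intro elasticity_mono hlam_radial_nonneg hlam_radial_mono) auto
  then show ?thesis using volume_density_pos[of x] assms by (simp add: hlam_eq_radial)
qed

lemma excess_pos:
  assumes "0 \<le> R" "R < norm x" "norm x < 1" "0 < logderiv (hlam x)"
  shows "0 < (elasticity (hlam x) - elasticity (hlam_radial R)) * volume_density x"
proof -
  have "elasticity (hlam_radial R) < elasticity (hlam_radial (norm x))"
    using assms by (intro elasticity_strict_mono hlam_radial_nonneg hlam_radial_strict_mono)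
      (auto simp: hlam_eq_radial)
  then show ?thesis using volume_density_pos[of x] assms by (simp add: hlam_eq_radial)
qed

lemma deficit_pos:
  assumes "norm x < R" "R < 1" "0 < logderiv (hlam_radial R)"
  shows "0 < (elasticity (hlam_radial R) - elasticity (hlam x)) * volume_density x"
proof -
  have "elasticity (hlam_radial (norm x)) < elasticity (hlam_radial R)"
    using assms by (intro elasticity_strict_mono hlam_radial_nonneg hlam_radial_strict_mono) auto
  then show ?thesis using volume_density_pos[of x] assms by (simp add: hlam_eq_radial)
qed

lemma set_integral_excess_nonneg:
  assumes "S \<subseteq> ball 0 1" "0 \<le> R"
  shows "0 \<le> (LINT x:S - ball 0 R|lborel.
           (elasticity (hlam x) - elasticity (hlam_radial R)) * volume_density x)"
  by (intro set_integral_nonneg excess_nonneg) (use assms in \<open>auto simp: subset_iff\<close>)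

lemma set_integral_deficit_nonneg:
  assumes "R < 1"
  shows "0 \<le> (LINT x:ball 0 R - S|lborel.
           (elasticity (hlam_radial R) - elasticity (hlam x)) * volume_density x)"
  by (intro set_integral_nonneg deficit_nonneg) (use assms in auto)

lemma phi_moment_ball_le:
  fixes S :: "'a::euclidean_space set"
  assumes S: "S \<in> sets lborel" "S \<subseteq> cball 0 b" "b < 1" and R: "0 \<le> R" "R < 1"
    and vol: "phi_volume (ball (0::'a) R) = phi_volume S"
  shows "phi_moment (ball (0::'a) R) \<le> phi_moment S"
  using phi_moment_minus_ball[OF S R vol] S R
    set_integral_excess_nonneg[of S R] set_integral_deficit_nonneg[of R S]
  by fastforce

lemma phi_moment_eq_ball_imp_excess_0:
  fixes S :: "'a::euclidean_space set"
  assumes S: "S \<in> sets lborel" "S \<subseteq> cball 0 b" "b < 1" and R: "0 \<le> R" "R < 1"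
    and vol: "phi_volume (ball (0::'a) R) = phi_volume S"
    and eq: "phi_moment S = phi_moment (ball (0::'a) R)"
  shows "(LINT x:S - ball 0 R|lborel.
           (elasticity (hlam x) - elasticity (hlam_radial R)) * volume_density x) = 0"
    and "(LINT x:ball 0 R - S|lborel.
           (elasticity (hlam_radial R) - elasticity (hlam x)) * volume_density x) = 0"
proof -
  have "S \<subseteq> ball 0 1" using S by auto
  then show "(LINT x:S - ball 0 R|lborel.
           (elasticity (hlam x) - elasticity (hlam_radial R)) * volume_density x) = 0"
    and "(LINT x:ball 0 R - S|lborel.
           (elasticity (hlam_radial R) - elasticity (hlam x)) * volume_density x) = 0"
    using phi_moment_minus_ball[OF S R vol] eq R
      set_integral_excess_nonneg[of S R] set_integral_deficit_nonneg[of R S]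
    by linarith+
qed

lemma eq_ball_if_excess_0:
  fixes S :: "'a::euclidean_space set"
  assumes S: "open S" "interior (closure S) = S" "S \<subseteq> cball 0 b" "b < 1"
    and R: "0 \<le> R" "R < 1" and growth: "0 < logderiv (hlam_radial R)"
    and out: "(LINT x:S - ball 0 R|lborel.
                (elasticity (hlam x) - elasticity (hlam_radial R)) * volume_density x) = 0"
    and inn: "(LINT x:ball 0 R - S|lborel.
                (elasticity (hlam_radial R) - elasticity (hlam x)) * volume_density x) = 0"
  shows "S = ball 0 R"
proof (rule regular_open_eq_ball[OF S(1,2)])
  have S1: "norm x < 1" if "x \<in> S" for x using that S by (auto simp: subset_iff)
  have cont: "continuous_on UNIV (\<lambda>s. elasticity s - elasticity (hlam_radial R))"
    "continuous_on UNIV (\<lambda>s. elasticity (hlam_radial R) - elasticity s)"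
    by (intro continuous_intros continuous_on_elasticity)+
  have "S - cball 0 R = {}"
  proof (rule open_subset_empty_if_set_integral_eq_0[OF _ _ out])
    show "set_integrable lborel (S - ball 0 R)
        (\<lambda>x. (elasticity (hlam x) - elasticity (hlam_radial R)) * volume_density x)"
      using S by (intro set_integrable_volume_density[OF cont(1)]) auto
    show "0 < (elasticity (hlam x) - elasticity (hlam_radial R)) * volume_density x"
      if "x \<in> S - cball 0 R" for x
    proof (rule excess_pos)
      have "hlam_radial R \<le> hlam x"
        using that R S1 by (auto simp: hlam_eq_radial intro!: hlam_radial_mono)
      then show "0 < logderiv (hlam x)" using growth logderiv_mono by (meson less_le_trans)
    qed (use that R S1 in auto)
    show "0 \<le> (elasticity (hlam x) - elasticity (hlam_radial R)) * volume_density x"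
      if "x \<in> S - ball 0 R" for x
      using that R S1 by (intro excess_nonneg) auto
  qed (use S in auto)
  then show "S \<subseteq> cball 0 R" by blast
  have "ball 0 R - closure S = {}"
  proof (rule open_subset_empty_if_set_integral_eq_0[OF _ _ inn])
    show "set_integrable lborel (ball 0 R - S)
        (\<lambda>x. (elasticity (hlam_radial R) - elasticity (hlam x)) * volume_density x)"
      using S R by (intro set_integrable_volume_density[OF cont(2) _ _ R(2)]) auto
    show "0 \<le> (elasticity (hlam_radial R) - elasticity (hlam x)) * volume_density x"
      if "x \<in> ball 0 R - S" for x
      using that R by (intro deficit_nonneg) auto
    show "0 < (elasticity (hlam_radial R) - elasticity (hlam x)) * volume_density x"
      if "x \<in> ball 0 R - closure S" for x
      using that R growth by (intro deficit_pos) auto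
  qed (use closure_subset in auto)
  then show "ball 0 R \<subseteq> closure S" by blast
qed

lemma phi_const_if_excess_0:
  fixes S :: "'a::euclidean_space set"
  assumes S: "open S" "S \<subseteq> cball 0 b" "b < 1"
    and R: "0 \<le> R" "R < 1" and flat: "logderiv (hlam_radial R) = 0"
    and out: "(LINT x:S - ball 0 R|lborel.
                (elasticity (hlam x) - elasticity (hlam_radial R)) * volume_density x) = 0"
  shows "\<forall>x\<in>S. \<phi> (hlam x) = \<phi> 0"
proof -
  have S1: "norm x < 1" if "x \<in> S" for x using that S by (auto simp: subset_iff)
  define U where "U = (S - cball 0 R) \<inter> (\<lambda>x. logderiv (hlam x)) -` {0<..}"
  have "open U"
    unfolding U_def
  proof (rule continuous_open_preimage)
    show "continuous_on (S - cball 0 R) (\<lambda>x. logderiv (hlam x))"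
      using S1 by (intro continuous_on_compose2[OF continuous_on_logderiv]
          continuous_on_subset[OF continuous_on_hlam]) auto
  qed (use S in auto)
  have "U = {}"
  proof (rule open_subset_empty_if_set_integral_eq_0[OF _ _ out \<open>open U\<close>])
    have "continuous_on UNIV (\<lambda>s. elasticity s - elasticity (hlam_radial R))"
      by (intro continuous_intros continuous_on_elasticity)
    then show "set_integrable lborel (S - ball 0 R)
        (\<lambda>x. (elasticity (hlam x) - elasticity (hlam_radial R)) * volume_density x)"
      using S by (intro set_integrable_volume_density) auto
    show "0 \<le> (elasticity (hlam x) - elasticity (hlam_radial R)) * volume_density x"
      if "x \<in> S - ball 0 R" for x
      using that R S1 by (intro excess_nonneg) auto
    show "0 < (elasticity (hlam x) - elasticity (hlam_radial R)) * volume_density x"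
      if "x \<in> U" for x
      using that R S1 by (intro excess_pos) (auto simp: U_def)
  qed (auto simp: U_def)
  have "logderiv (hlam x) = 0" if x: "x \<in> S" for x
  proof (cases "norm x \<le> R")
    case True
    then have "hlam x \<le> hlam_radial R"
      using S1[OF x] R by (simp add: hlam_eq_radial hlam_radial_mono)
    then show ?thesis
      using logderiv_mono[of "hlam x" "hlam_radial R"] logderiv_nonneg[OF hlam_nonneg[OF S1[OF x]]] flat
      by linarith
  next
    case False
    then show ?thesis
      using \<open>U = {}\<close> x logderiv_nonneg[OF hlam_nonneg[OF S1[OF x]]] by (force simp: U_def)
  qed
  then show ?thesis using phi_eq_phi_0 hlam_nonneg S1 by blast
qed

lemma phi_moment_eq_ball_cases:
  fixes S :: "'a::euclidean_space set"
  assumes S: "open S" "interior (closure S) = S" "S \<subseteq> cball 0 b" "b < 1"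
    and R: "0 \<le> R" "R < 1"
    and vol: "phi_volume (ball (0::'a) R) = phi_volume S"
    and eq: "phi_moment S = phi_moment (ball (0::'a) R)"
  shows "S = ball 0 R \<or> (\<forall>x\<in>S. \<phi> (hlam x) = \<phi> 0)"
proof -
  have "S \<in> sets lborel" using S by simp
  note excess_0 = phi_moment_eq_ball_imp_excess_0[OF this S(3,4) R vol eq]
  show ?thesis
  proof (cases "0 < logderiv (hlam_radial R)")
    case True
    then show ?thesis using eq_ball_if_excess_0[OF S R _ excess_0] by blast
  next
    case False
    then have "logderiv (hlam_radial R) = 0"
      using logderiv_nonneg[OF hlam_radial_nonneg[OF R]] by simp
    then show ?thesis using phi_const_if_excess_0[OF S(1,3,4) R _ excess_0(1)] by blast
  qed
qed

end

theorem lemma2p4: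
  fixes \<Omega> :: "'a::euclidean_space set"
    and \<phi> :: "real \<Rightarrow> real"
    and \<eta> :: "real \<Rightarrow> real"
  defines "n \<equiv> DIM('a) - 1"
  assumes dim: "DIM('a) \<ge> 2"
    and dom: "hyp_bounded_domain \<Omega>"
    and smooth: "smooth_fun \<phi>"
    and pos: "\<And>s. \<phi> s > 0"
    and even: "\<And>s. \<phi> (- s) = \<phi> s"
    and logconv: "\<And>s. deriv (deriv (\<lambda>u. ln (\<phi> u))) s \<ge> 0"
    and eta: "\<And>t. t \<ge> 0 \<Longrightarrow>
               \<eta> (sphere_area n * integral {0..t} (\<lambda>s. \<phi> s * s ^ n))
                 = sphere_area n * integral {0..t} (\<lambda>s. deriv \<phi> s * s ^ (n + 1))"
  shows "(hyp_integral \<Omega> (\<lambda>x. deriv \<phi> (hlam x) * hlam' x * hlam x)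
           \<ge> \<eta> (hyp_integral \<Omega> (\<lambda>x. \<phi> (hlam x) * hlam' x)))
         \<and> (\<not> (\<exists>c. \<forall>x\<in>\<Omega>. \<phi> (hlam x) = c) \<longrightarrow>
           (hyp_integral \<Omega> (\<lambda>x. deriv \<phi> (hlam x) * hlam' x * hlam x)
              = \<eta> (hyp_integral \<Omega> (\<lambda>x. \<phi> (hlam x) * hlam' x))
            \<longleftrightarrow> (\<exists>\<rho>>0. \<Omega> = hyp_ball0 \<rho>)))"
proof -
  interpret log_convex_weight \<phi> using smooth pos even logconv by unfold_locales
  have ball_eta: "phi_moment (ball (0::'a) R) = \<eta> (phi_volume (ball (0::'a) R))"
    if "0 \<le> R" "R < 1" for R
    using eta[OF hlam_radial_nonneg[OF that]] that
    by (simp add: phi_moment_ball phi_volume_ball n_def)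
  obtain b where b: "b < 1" "\<Omega> \<subseteq> cball 0 b" using hyp_bounded_domain_subset_cball[OF dom] .
  have \<Omega>: "open \<Omega>" "interior (closure \<Omega>) = \<Omega>" "\<Omega> \<noteq> {}"
    using dom by (auto simp: hyp_bounded_domain_def)
  then have \<Omega>_sets: "\<Omega> \<in> sets lborel" by simp
  obtain R where R: "0 \<le> R" "R < 1" and vol: "phi_volume (ball (0::'a) R) = phi_volume \<Omega>"
    using exists_ball_same_phi_volume[OF \<Omega>_sets b(2,1)] .
  have "phi_moment \<Omega> \<ge> \<eta> (phi_volume \<Omega>)"
    using phi_moment_ball_le[OF \<Omega>_sets b(2,1) R vol] ball_eta[OF R] vol by simp
  moreover have "phi_moment \<Omega> = \<eta> (phi_volume \<Omega>) \<longleftrightarrow> (\<exists>\<rho>>0. \<Omega> = hyp_ball0 \<rho>)"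
    if nonconst: "\<not> (\<exists>c. \<forall>x\<in>\<Omega>. \<phi> (hlam x) = c)"
  proof
    assume "phi_moment \<Omega> = \<eta> (phi_volume \<Omega>)"
    then have eq: "phi_moment \<Omega> = phi_moment (ball (0::'a) R)" using ball_eta[OF R] vol by simp
    then have "\<Omega> = ball 0 R"
      using phi_moment_eq_ball_cases[OF \<Omega>(1,2) b(2,1) R vol eq] nonconst by blast
    moreover from this have "0 < R" using \<Omega>(3) by (cases "0 < R") auto
    ultimately show "\<exists>\<rho>>0. \<Omega> = hyp_ball0 \<rho>" using ball_eq_hyp_ball0 R(2) by blast
  next
    assume "\<exists>\<rho>>0. \<Omega> = hyp_ball0 \<rho>"
    then obtain \<rho> where "0 < \<rho>" "\<Omega> = ball 0 (euclid_radius \<rho>)" by (auto simp: hyp_ball0_eq_ball)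
    then show "phi_moment \<Omega> = \<eta> (phi_volume \<Omega>)"
      using ball_eta euclid_radius_pos euclid_radius_less_1 by (simp add: less_imp_le)
  qed
  ultimately show ?thesis by blast
qed

end
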